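(* Let $N,q\in\mathbb Z$, $Q\in\mathbb Q$ and $i\in\mathbb Z$ with $i\le N$. Then $$z^i\equiv\sum_{k=1}^{N-q}\sum_{j=1}^{k}\binom{-Q}{-i+q+j}\binom{Q}{k-j}z^{q+k}\pmod{O(N,Q,q;z)}.$$
   Context: For $N,q\in\mathbb Z$ and $Q\in\mathbb Q$, $O(N,Q,q;z)$ is the subspace of $\mathbb C[z,z^{-1}]$ spanned by the monomials $z^i$ with $i\ge N+1$ together with the Laurent polynomials $\sum_{i=0}^{N-q-j}\binom Qi z^{i+q+j}$ for $j=0,-1,-2,\dots$ (equivalently $\mathrm{Res}_x\big((1+x)^Qx^{q+j}\sum_{i\le N}z^ix^{-i-1}\big)$). Binomial coefficients $\binom{c}{k}$ with $k<0$ are $0$; empty sums are $0$. *)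

theory Defs
  imports Complex_Main
begin

text \<open>Laurent polynomials in C[z,z^-1] are represented by their coefficient
functions int => complex (finitely supported); z^m is the monomial below.\<close>

definition zmono :: "int \<Rightarrow> int \<Rightarrow> complex" where
  "zmono m = (\<lambda>n. if n = m then 1 else 0)"

definition binomZ :: "complex \<Rightarrow> int \<Rightarrow> complex" where
  "binomZ c k = (if k < 0 then 0 else c gchoose (nat k))"

definition lin_span :: "(int \<Rightarrow> complex) set \<Rightarrow> (int \<Rightarrow> complex) set" where
  "lin_span S = {f. \<exists>T c. finite T \<and> T \<subseteq> S \<and> f = (\<lambda>n. \<Sum>g\<in>T. c g * g n)}"

definition Ogen :: "int \<Rightarrow> rat \<Rightarrow> int \<Rightarrow> int \<Rightarrow> int \<Rightarrow> complex" where
  "Ogen N Q q j = (\<lambda>n. \<Sum>i\<in>{0..N-q-j}. binomZ (of_rat Q) i * zmono (i+q+j) n)"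

definition Ospace :: "int \<Rightarrow> rat \<Rightarrow> int \<Rightarrow> (int \<Rightarrow> complex) set" where
  "Ospace N Q q = lin_span ({zmono i | i. i \<ge> N + 1} \<union> {Ogen N Q q j | j. j \<le> 0})"

end

theory Submission
  imports Defs "HOL-Computational_Algebra.Formal_Power_Series"
begin

(* A Laurent polynomial is identified with its coefficient function; the
   generators of O(N,Q,q;z) are G_j = sum_{i=0}^{N-q-j} binom(Q,i) z^(i+q+j), whose
   coefficient at z^n (n <= N) is binom(Q, n-q-j).  The inverse pair
   sum_k binom(-Q,k) binom(Q,m-k) = [m = 0]  (Vandermonde with Q + (-Q) = 0) shows that
   for i <= N the monomial z^i is the *finite* combination
        z^i = sum_{j} binom(-Q, -i+q+j) G_j ,
   with j ranging over any interval from at most i-q to at least N-q.  Splitting this sum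
   at j = 0, the part j <= 0 lies in O(N,Q,q;z) by definition, while the part j >= 1,
   after exchanging the order of summation, is exactly the double sum of the theorem. *)

lemma lin_span_add:
  assumes "f1 \<in> lin_span S" "f2 \<in> lin_span S"
  shows "(\<lambda>n. f1 n + f2 n) \<in> lin_span S"
proof -
  obtain T1 c1 where T1: "finite T1" "T1 \<subseteq> S" "f1 = (\<lambda>n. \<Sum>g\<in>T1. c1 g * g n)"
    using assms(1) unfolding lin_span_def by blast
  obtain T2 c2 where T2: "finite T2" "T2 \<subseteq> S" "f2 = (\<lambda>n. \<Sum>g\<in>T2. c2 g * g n)"
    using assms(2) unfolding lin_span_def by blast
  define c where "c g = (if g \<in> T1 then c1 g else 0) + (if g \<in> T2 then c2 g else 0)" for g
  have "f1 n + f2 n = (\<Sum>g\<in>T1 \<union> T2. c g * g n)" for n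
  proof -
    have "(\<Sum>g\<in>T1 \<union> T2. c g * g n)
        = (\<Sum>g\<in>T1 \<union> T2. if g \<in> T1 then c1 g * g n else 0)
          + (\<Sum>g\<in>T1 \<union> T2. if g \<in> T2 then c2 g * g n else 0)"
      unfolding sum.distrib[symmetric] by (intro sum.cong) (auto simp: c_def algebra_simps)
    also have "\<dots> = f1 n + f2 n"
      using T1(1) T2(1) T1(3) T2(3)
        sum.inter_restrict[of "T1 \<union> T2" "\<lambda>g. c1 g * g n" T1]
        sum.inter_restrict[of "T1 \<union> T2" "\<lambda>g. c2 g * g n" T2]
      by (simp add: Int_absorb2)
    finally show ?thesis by simp
  qed
  then show ?thesis
    unfolding lin_span_def using T1 T2 by blast
qed

lemma lin_span_combination:
  assumes "finite J" "\<And>j. j \<in> J \<Longrightarrow> G j \<in> S"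
  shows "(\<lambda>n. \<Sum>j\<in>J. c j * G j n) \<in> lin_span S"
  using assms
proof (induction J rule: finite_induct)
  case empty
  have "(\<lambda>n. 0) \<in> lin_span S"
    unfolding lin_span_def by (intro CollectI exI[of _ "{}"]) simp
  then show ?case by simp
next
  case (insert x J)
  have "(\<lambda>n. c x * G x n) \<in> lin_span S"
    using insert.prems unfolding lin_span_def
    by (intro CollectI exI[of _ "{G x}"] exI[of _ "\<lambda>_. c x"]) auto
  then show ?case
    using lin_span_add insert by simp
qed

lemma sum_shift_int:
  fixes a b c :: int
  shows "(\<Sum>j\<in>{a..b}. f j) = (\<Sum>k\<in>{a-c..b-c}. f (k + c))"
proof -
  have "{a..b} = (\<lambda>k. k + c) ` {a-c..b-c}" by simp
  moreover have "inj_on (\<lambda>k. k + c) {a-c..b-c}" by (simp add: inj_on_def)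
  ultimately show ?thesis by (simp only: sum.reindex) simp
qed

lemma binomZ_Vandermonde:
  "(\<Sum>k\<in>{0..m}. binomZ a k * binomZ b (m - k)) = binomZ (a + b) m"
proof (cases "m < 0")
  case True
  then show ?thesis by (simp add: binomZ_def)
next
  case False
  have "{0..m} = int ` {0..nat m}"
    using False by (simp add: image_int_atLeastAtMost)
  then have "(\<Sum>k\<in>{0..m}. binomZ a k * binomZ b (m - k))
      = (\<Sum>k\<in>{0..nat m}. binomZ a (int k) * binomZ b (m - int k))"
    by (simp add: sum.reindex)
  also have "\<dots> = (\<Sum>k\<in>{0..nat m}. (a gchoose k) * (b gchoose (nat m - k)))"
    using False by (intro sum.cong) (auto simp: binomZ_def nat_diff_distrib)
  also have "\<dots> = binomZ (a + b) m"
    using False by (simp add: gbinomial_Vandermonde binomZ_def)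
  finally show ?thesis .
qed

lemma binomZ_inverse_pair:
  "(\<Sum>k\<in>{0..m}. binomZ (- a) k * binomZ a (m - k)) = (if m = 0 then 1 else 0)"
  using binomZ_Vandermonde[of "- a" a m] by (simp add: binomZ_def gbinomial_0_left)

lemma Ogen_coeff:
  "Ogen N Q q j n = (if n \<le> N then binomZ (of_rat Q) (n - q - j) else 0)"
proof -
  have "Ogen N Q q j n = (\<Sum>l\<in>{0..N-q-j}. if l = n - q - j then binomZ (of_rat Q) l else 0)"
    unfolding Ogen_def zmono_def by (intro sum.cong) auto
  also have "\<dots> = (if n - q - j \<in> {0..N-q-j} then binomZ (of_rat Q) (n - q - j) else 0)"
    by simp
  finally show ?thesis
    by (auto simp: binomZ_def)
qed

lemma Ogen_shifted:
  "Ogen N Q q j n = (\<Sum>k\<in>{j..N-q}. binomZ (of_rat Q) (k - j) * zmono (q + k) n)"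
  unfolding Ogen_def
  using sum_shift_int[of "\<lambda>k. binomZ (of_rat Q) (k - j) * zmono (q + k) n" j "N - q" j]
  by (simp add: ac_simps)

text \<open>Below \<open>N\<close> this is the inverse-pair identity for
  \<open>m = n - i\<close>; above \<open>N\<close> both sides vanish.\<close>

lemma monomial_expansion:
  fixes N q i L U :: int and Q :: rat
  assumes "i \<le> N" "L \<le> i - q" "N - q \<le> U"
  shows "zmono i n = (\<Sum>j\<in>{L..U}. binomZ (- of_rat Q) (- i + q + j) * Ogen N Q q j n)"
proof (cases "n \<le> N")
  case True
  let ?t = "\<lambda>j. binomZ (- of_rat Q) (- i + q + j) * binomZ (of_rat Q) (n - q - j)"
  have "(\<Sum>j\<in>{L..U}. binomZ (- of_rat Q) (- i + q + j) * Ogen N Q q j n)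
      = (\<Sum>j\<in>{L..U}. ?t j)"
    using True by (simp add: Ogen_coeff)
  also have "\<dots> = (\<Sum>j\<in>{i-q..n-q}. ?t j)"
    (* outside {i-q..n-q} one of the two lower indices is negative *)
    using True assms by (intro sum.mono_neutral_right) (auto simp: binomZ_def)
  also have "\<dots> = (\<Sum>k\<in>{0..n-i}. binomZ (- of_rat Q) k * binomZ (of_rat Q) (n - i - k))"
    using sum_shift_int[of ?t "i - q" "n - q" "i - q"] by (simp add: algebra_simps)
  also have "\<dots> = zmono i n"
    by (simp add: binomZ_inverse_pair zmono_def)
  finally show ?thesis by simp
next
  case False
  then show ?thesis
    using assms by (simp add: Ogen_coeff zmono_def)
qed

lemma sum_triangle_swap:
  fixes M :: int
  shows "(\<Sum>k\<in>{1..M}. \<Sum>j\<in>{1..k}. f k j) = (\<Sum>j\<in>{1..M}. \<Sum>k\<in>{j..M}. f k j)"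
proof -
  have "(\<Sum>k\<in>{1..M}. \<Sum>j\<in>{1..k}. f k j)
      = (\<Sum>k\<in>{1..M}. \<Sum>j\<in>{j. j \<in> {1..M} \<and> j \<le> k}. f k j)"
    by (intro sum.cong) auto
  also have "\<dots> = (\<Sum>j\<in>{1..M}. \<Sum>k\<in>{k. k \<in> {1..M} \<and> k \<ge> j}. f k j)"
    by (rule sum.swap_restrict) simp_all
  also have "\<dots> = (\<Sum>j\<in>{1..M}. \<Sum>k\<in>{j..M}. f k j)"
    by (intro sum.cong) auto
  finally show ?thesis .
qed

lemma tail_as_double_sum:
  fixes N q i :: int and Q :: rat
  shows "(\<Sum>k\<in>{1..N-q}. \<Sum>j\<in>{1..k}.
            binomZ (- of_rat Q) (- i + q + j) * binomZ (of_rat Q) (k - j) * zmono (q + k) n)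
       = (\<Sum>j\<in>{1..N-q}. binomZ (- of_rat Q) (- i + q + j) * Ogen N Q q j n)"
  by (simp add: sum_triangle_swap Ogen_shifted sum_distrib_left mult.assoc)

theorem mainTheorem4:
  fixes N q i :: int and Q :: rat
  assumes "i \<le> N"
  shows "(\<lambda>n. zmono i n -
            (\<Sum>k\<in>{1..N-q}. \<Sum>j\<in>{1..k}.
               binomZ (- of_rat Q) (- i + q + j) * binomZ (of_rat Q) (k - j) * zmono (q + k) n))
         \<in> Ospace N Q q"
proof -
  define c where "c j = binomZ (- of_rat Q) (- i + q + j)" for j
  define L where "L = min (i - q) 1"
  have split: "{L..max 0 (N-q)} = {L..0} \<union> {1..N-q}" "{L..0} \<inter> {1..N-q} = {}"
    unfolding L_def by auto
  have expansion:
    "zmono i n = (\<Sum>j\<in>{L..0}. c j * Ogen N Q q j n) + (\<Sum>j\<in>{1..N-q}. c j * Ogen N Q q j n)"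
    for n
    using monomial_expansion[OF assms, where L=L and U="max 0 (N-q)" and n=n and Q=Q] split
    by (simp add: L_def c_def sum.union_disjoint)
  have "(\<lambda>n. zmono i n -
            (\<Sum>k\<in>{1..N-q}. \<Sum>j\<in>{1..k}.
               binomZ (- of_rat Q) (- i + q + j) * binomZ (of_rat Q) (k - j) * zmono (q + k) n))
      = (\<lambda>n. \<Sum>j\<in>{L..0}. c j * Ogen N Q q j n)"
    unfolding tail_as_double_sum unfolding c_def[symmetric] using expansion by simp
  also have "\<dots> \<in> Ospace N Q q"
    unfolding Ospace_def by (rule lin_span_combination) auto
  finally show ?thesis .
qed

end
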